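(* Assume (C1) and (C2). For any $u\in\mathcal{N}$, $$I(u)=\max_{t\ge0}I(tu).$$
   Context: Fix real numbers $p,q,r$ with $1<p<q$, $\frac p2$ a positive integer, and $r\ge1$, and functions $a,b,c:\mathbb{Z}\to(0,+\infty)$. Conditions: - (C1) There is $b_0>0$ with $b(n)\ge b_0$ for all $n$ and $b(n)\to+\infty$ as $|n|\to\infty$. - (C2) There is $c_0>0$ with $c(n)\le c_0$ for all $n$ and $\sum_n c(n)<+\infty$. Notation and spaces: - $\Delta u(n)=u(n+1)-u(n)$. - $E$ is the set of real sequences $u$ with $\|u\|:=\big(\sum_n[a(n)|\Delta u(n)|^p+b(n)|u(n)|^p]\big)^{1/p}<\infty$. - $\mathcal{D}=\{u\in E:\sum_n c(n)|u(n)|^q\ln|u(n)|^r<+\infty\}$, where terms with $u(n)=0$ are read as $0$. For $u,v\in\mathcal{D}$: - $I(u)=\frac1p\|u\|^p+\frac{r}{q^2}\sum_n c(n)|u(n)|^q-\frac1q\sum_n c(n)|u(n)|^q\ln|u(n)|^r$. - $\langle I'(u),v\rangle=\sum_n[a(n)|\Delta u(n)|^{p-2}\Delta u(n)\Delta v(n)+b(n)|u(n)|^{p-2}u(n)v(n)]-\sum_n c(n)|u(n)|^{q-2}u(n)v(n)\ln|u(n)|^r$. $\mathcal{N}=\{u\in\mathcal{D}:u\ne0,\ \langle I'(u),u\rangle=0\}$. *)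

theory Defs
  imports "HOL-Analysis.Analysis"
begin

text \<open>Sequences are functions int => real; sums over Z are unconditional
(absolute) sums, i.e. infsum / summable_on over UNIV.\<close>

definition fdiff :: "(int \<Rightarrow> real) \<Rightarrow> int \<Rightarrow> real" where
  "fdiff u n = u (n + 1) - u n"

definition E_term :: "real \<Rightarrow> (int \<Rightarrow> real) \<Rightarrow> (int \<Rightarrow> real) \<Rightarrow> (int \<Rightarrow> real) \<Rightarrow> int \<Rightarrow> real" where
  "E_term p a b u n = a n * \<bar>fdiff u n\<bar> powr p + b n * \<bar>u n\<bar> powr p"

definition Espace :: "real \<Rightarrow> (int \<Rightarrow> real) \<Rightarrow> (int \<Rightarrow> real) \<Rightarrow> (int \<Rightarrow> real) set" where
  "Espace p a b = {u. E_term p a b u summable_on UNIV}"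

definition Enorm_p :: "real \<Rightarrow> (int \<Rightarrow> real) \<Rightarrow> (int \<Rightarrow> real) \<Rightarrow> (int \<Rightarrow> real) \<Rightarrow> real" where
  "Enorm_p p a b u = (\<Sum>\<^sub>\<infinity>n. E_term p a b u n)"

definition log_term :: "real \<Rightarrow> real \<Rightarrow> (int \<Rightarrow> real) \<Rightarrow> (int \<Rightarrow> real) \<Rightarrow> int \<Rightarrow> real" where
  "log_term q r c u n = (if u n = 0 then 0 else c n * \<bar>u n\<bar> powr q * ln (\<bar>u n\<bar> powr r))"

definition Dspace :: "real \<Rightarrow> real \<Rightarrow> real \<Rightarrow> (int \<Rightarrow> real) \<Rightarrow> (int \<Rightarrow> real) \<Rightarrow> (int \<Rightarrow> real) \<Rightarrow> (int \<Rightarrow> real) set" where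
  "Dspace p q r a b c = {u \<in> Espace p a b. log_term q r c u summable_on UNIV}"

definition Ifun :: "real \<Rightarrow> real \<Rightarrow> real \<Rightarrow> (int \<Rightarrow> real) \<Rightarrow> (int \<Rightarrow> real) \<Rightarrow> (int \<Rightarrow> real) \<Rightarrow> (int \<Rightarrow> real) \<Rightarrow> real" where
  "Ifun p q r a b c u =
     Enorm_p p a b u / p + r / q^2 * (\<Sum>\<^sub>\<infinity>n. c n * \<bar>u n\<bar> powr q)
     - (\<Sum>\<^sub>\<infinity>n. log_term q r c u n) / q"

definition Ideriv :: "real \<Rightarrow> real \<Rightarrow> real \<Rightarrow> (int \<Rightarrow> real) \<Rightarrow> (int \<Rightarrow> real) \<Rightarrow> (int \<Rightarrow> real) \<Rightarrow> (int \<Rightarrow> real) \<Rightarrow> (int \<Rightarrow> real) \<Rightarrow> real" where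
  "Ideriv p q r a b c u v =
     (\<Sum>\<^sub>\<infinity>n. a n * \<bar>fdiff u n\<bar> powr (p - 2) * fdiff u n * fdiff v n
            + b n * \<bar>u n\<bar> powr (p - 2) * u n * v n)
     - (\<Sum>\<^sub>\<infinity>n. (if u n = 0 then 0 else
            c n * \<bar>u n\<bar> powr (q - 2) * u n * v n * ln (\<bar>u n\<bar> powr r)))"

definition Nehari :: "real \<Rightarrow> real \<Rightarrow> real \<Rightarrow> (int \<Rightarrow> real) \<Rightarrow> (int \<Rightarrow> real) \<Rightarrow> (int \<Rightarrow> real) \<Rightarrow> (int \<Rightarrow> real) set" where
  "Nehari p q r a b c = {u \<in> Dspace p q r a b c. u \<noteq> (\<lambda>_. 0) \<and> Ideriv p q r a b c u u = 0}"

end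

theory Submission
  imports Defs
begin

text \<open>Along the ray \<open>t \<mapsto> t u\<close> every term of \<open>I\<close> is homogeneous, apart from the
  extra \<open>ln t\<close> produced by the logarithm. With \<open>A = \<parallel>u\<parallel>\<^sup>p\<close>, \<open>B = \<Sum> c |u|\<^sup>q\<close> and
  \<open>L = \<Sum> c |u|\<^sup>q ln |u|\<^sup>r\<close> one gets
  \<open>I(t u) = t\<^sup>p A/p + t\<^sup>q (r B/q\<^sup>2 - L/q) - (r/q) t\<^sup>q ln t B\<close>.
  The Nehari condition \<open>\<langle>I'(u), u\<rangle> = 0\<close> says exactly \<open>A = L\<close>; the derivative in \<open>t\<close> is then
  \<open>A (t\<^sup>p\<^sup>-\<^sup>1 - t\<^sup>q\<^sup>-\<^sup>1) - r B t\<^sup>q\<^sup>-\<^sup>1 ln t\<close>, which is nonnegative for \<open>t \<le> 1\<close> and nonpositive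
  for \<open>t \<ge> 1\<close>, so \<open>t = 1\<close> is the maximum. The only analytic input is the convergence of \<open>B\<close>:
  \<open>b \<ge> b\<^sub>0\<close> makes every \<open>u \<in> E\<close> bounded, and \<open>c\<close> is summable.\<close>

definition fibering_map :: "real \<Rightarrow> real \<Rightarrow> real \<Rightarrow> real \<Rightarrow> real \<Rightarrow> real \<Rightarrow> real" where
  "fibering_map p q r A B t =
     A * (t powr p / p - t powr q / q) + r * B * (t powr q / q\<^sup>2 - t powr q * ln t / q)"

lemma fibering_map_has_derivative:
  assumes "0 < t" "p \<noteq> 0" "q \<noteq> 0"
  shows "(fibering_map p q r A B has_real_derivative
           A * (t powr (p - 1) - t powr (q - 1)) - r * B * (t powr (q - 1) * ln t)) (at t)"
proof -
  have "t powr q * (1 / t) = t powr (q - 1)"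
    using assms by (simp add: powr_diff)
  then show ?thesis
    unfolding fibering_map_def using assms
    by (auto intro!: derivative_eq_intros simp: eval_nat_numeral field_simps)
qed

lemma fibering_map_derivative_sign:
  fixes t p q A B r :: real
  assumes "0 < t" "p \<le> q" "0 \<le> A" "0 \<le> B" "0 \<le> r"
  shows "(t - 1) * (A * (t powr (p - 1) - t powr (q - 1)) - r * B * (t powr (q - 1) * ln t)) \<le> 0"
proof (cases "t \<le> 1")
  case True
  have "t powr (q - 1) \<le> t powr (p - 1)"
    using True assms by (intro powr_mono') auto
  then have "0 \<le> A * (t powr (p - 1) - t powr (q - 1))"
    using assms by simp
  moreover have "r * B * (t powr (q - 1) * ln t) \<le> 0"
    using True assms by (simp add: mult_nonneg_nonpos)
  ultimately show ?thesis
    using True by (simp add: mult_nonpos_nonneg)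
next
  case False
  have "t powr (p - 1) \<le> t powr (q - 1)"
    using False assms by (intro powr_mono) auto
  then have "A * (t powr (p - 1) - t powr (q - 1)) \<le> 0"
    using assms by (simp add: mult_nonneg_nonpos)
  moreover have "0 \<le> r * B * (t powr (q - 1) * ln t)"
    using False assms by simp
  ultimately show ?thesis
    using False by (simp add: mult_nonneg_nonpos)
qed

lemma fibering_map_le_one:
  assumes "0 \<le> t" "0 < p" "p \<le> q" "0 \<le> A" "0 \<le> B" "0 \<le> r"
  shows "fibering_map p q r A B t \<le> fibering_map p q r A B 1"
proof -
  define f' where "f' x = A * (x powr (p - 1) - x powr (q - 1)) - r * B * (x powr (q - 1) * ln x)" for x
  have deriv: "(fibering_map p q r A B has_real_derivative f' x) (at x)" if "0 < x" for x
    unfolding f'_def using fibering_map_has_derivative[OF that] assms by simp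
  have sign: "(x - 1) * f' x \<le> 0" if "0 < x" for x
    unfolding f'_def using fibering_map_derivative_sign[OF that] assms by simp
  have cont: "continuous_on {x..y} (fibering_map p q r A B)" if "0 < x" for x y
    using that by (intro continuous_at_imp_continuous_on ballI DERIV_isCont[OF deriv]) auto
  consider "t = 0" | "0 < t" "t \<le> 1" | "1 < t"
    using assms(1) by linarith
  then show ?thesis
  proof cases
    case 1
    have "1 / q \<le> 1 / p"
      using assms by (intro divide_left_mono) auto
    then show ?thesis
      using 1 assms by (simp add: fibering_map_def)
  next
    case 2
    show ?thesis
    proof (rule DERIV_nonneg_imp_increasing_open[OF \<open>t \<le> 1\<close> _ cont[OF \<open>0 < t\<close>]])
      fix x assume "t < x" "x < 1"
      with 2 sign[of x] have "0 \<le> f' x"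
        by (simp add: mult_le_0_iff)
      moreover have "DERIV (fibering_map p q r A B) x :> f' x"
        using \<open>t < x\<close> 2 by (intro deriv) simp
      ultimately show "\<exists>y. DERIV (fibering_map p q r A B) x :> y \<and> 0 \<le> y"
        by blast
    qed
  next
    case 3
    show ?thesis
    proof (rule DERIV_nonpos_imp_decreasing_open[OF _ _ cont])
      fix x assume "1 < x" "x < t"
      with sign[of x] have "f' x \<le> 0"
        by (simp add: mult_le_0_iff)
      moreover have "DERIV (fibering_map p q r A B) x :> f' x"
        using \<open>1 < x\<close> by (intro deriv) simp
      ultimately show "\<exists>y. DERIV (fibering_map p q r A B) x :> y \<and> y \<le> 0"
        by blast
    qed (use 3 in auto)
  qed
qed

lemma E_term_scale:
  assumes "0 \<le> t"
  shows "E_term p a b (\<lambda>n. t * u n) = (\<lambda>n. t powr p * E_term p a b u n)"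
proof
  fix n
  have "fdiff (\<lambda>n. t * u n) n = t * fdiff u n"
    by (simp add: fdiff_def algebra_simps)
  then show "E_term p a b (\<lambda>n. t * u n) n = t powr p * E_term p a b u n"
    using assms by (simp add: E_term_def abs_mult powr_mult algebra_simps)
qed

text \<open>For \<open>t = 0\<close> both sides vanish, because \<open>ln 0 = 0\<close> and \<open>0 powr q = 0\<close>.\<close>

lemma log_term_scale:
  assumes "0 \<le> t"
  shows "log_term q r c (\<lambda>n. t * u n)
           = (\<lambda>n. t powr q * log_term q r c u n + r * ln t * t powr q * (c n * \<bar>u n\<bar> powr q))"
proof
  fix n
  show "log_term q r c (\<lambda>n. t * u n) n
          = t powr q * log_term q r c u n + r * ln t * t powr q * (c n * \<bar>u n\<bar> powr q)"
  proof (cases "t = 0 \<or> u n = 0")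
    case True
    then show ?thesis by (auto simp: log_term_def)
  next
    case False
    with assms have "0 < t" "0 < \<bar>u n\<bar>" by auto
    then have "ln (\<bar>t * u n\<bar> powr r) = r * ln t + ln (\<bar>u n\<bar> powr r)"
      by (simp add: abs_mult powr_mult ln_mult)
    with \<open>0 < t\<close> False show ?thesis
      by (simp add: log_term_def abs_mult powr_mult algebra_simps)
  qed
qed

lemma abs_powr_minus_two_mult_self: "\<bar>x::real\<bar> powr (p - 2) * x * x = \<bar>x\<bar> powr p"
proof (cases "x = 0")
  case False
  then have "x * x = \<bar>x\<bar> powr 2"
    by (simp add: powr_numeral power2_eq_square)
  then have "\<bar>x\<bar> powr (p - 2) * x * x = \<bar>x\<bar> powr (p - 2) * \<bar>x\<bar> powr 2"
    by (simp only: mult.assoc)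
  also have "\<dots> = \<bar>x\<bar> powr (p - 2 + 2)"
    by (rule powr_add[symmetric])
  finally show ?thesis by simp
qed simp

lemma Ideriv_self:
  "Ideriv p q r a b c u u = Enorm_p p a b u - (\<Sum>\<^sub>\<infinity>n. log_term q r c u n)"
proof -
  have "\<And>c x e. c * \<bar>x::real\<bar> powr e * x * x = c * (\<bar>x\<bar> powr e * x * x)"
    by (simp only: mult.assoc)
  then show ?thesis
    unfolding Ideriv_def Enorm_p_def E_term_def log_term_def
    by (simp only: abs_powr_minus_two_mult_self)
qed

lemma Espace_abs_le:
  assumes "u \<in> Espace p a b" "0 < p" "\<And>n. 0 \<le> a n" "0 < b0" "\<And>n. b0 \<le> b n"
  shows "\<bar>u n\<bar> \<le> (Enorm_p p a b u / b0) powr (1 / p)"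
proof -
  have nonneg: "0 \<le> E_term p a b u m" for m
    using assms(3)[of m] assms(4) assms(5)[of m] by (simp add: E_term_def)
  have "b0 * \<bar>u n\<bar> powr p \<le> E_term p a b u n"
    using nonneg[of n] assms(5)[of n] unfolding E_term_def
    by (smt (verit) mult_right_mono powr_ge_zero zero_le_mult_iff assms(3))
  also have "E_term p a b u n = (\<Sum>\<^sub>\<infinity>m\<in>{n}. E_term p a b u m)"
    by simp
  also have "\<dots> \<le> Enorm_p p a b u"
    unfolding Enorm_p_def using assms(1) nonneg
    by (intro infsum_mono_neutral) (auto simp: Espace_def)
  finally have "\<bar>u n\<bar> powr p \<le> Enorm_p p a b u / b0"
    using assms(4) by (simp add: field_simps)
  then have "(\<bar>u n\<bar> powr p) powr (1 / p) \<le> (Enorm_p p a b u / b0) powr (1 / p)"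
    using assms(2) by (intro powr_mono2) auto
  then show ?thesis
    using assms(2) by (simp add: powr_powr)
qed

lemma summable_on_mult_abs_powr_bounded:
  fixes c u :: "'a \<Rightarrow> real"
  assumes "c summable_on UNIV" "\<And>n. 0 \<le> c n" "\<And>n. \<bar>u n\<bar> \<le> M" "0 \<le> q"
  shows "(\<lambda>n. c n * \<bar>u n\<bar> powr q) summable_on UNIV"
proof (rule summable_on_comparison_test)
  show "(\<lambda>n. M powr q * c n) summable_on UNIV"
    using assms(1) by (rule summable_on_cmult_right)
  fix n
  have "\<bar>u n\<bar> powr q \<le> M powr q"
    using assms(3,4) by (intro powr_mono2) auto
  then show "c n * \<bar>u n\<bar> powr q \<le> M powr q * c n"
    using assms(2)[of n] by (simp add: mult.commute mult_left_mono)
  show "0 \<le> c n * \<bar>u n\<bar> powr q"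
    using assms(2)[of n] by simp
qed

lemma Dspace_scale:
  assumes "u \<in> Dspace p q r a b c" "(\<lambda>n. c n * \<bar>u n\<bar> powr q) summable_on UNIV" "0 \<le> t"
  shows "(\<lambda>n. t * u n) \<in> Dspace p q r a b c"
  using assms
  by (simp add: Dspace_def Espace_def E_term_scale log_term_scale
      summable_on_add summable_on_cmult_right)

lemma Ifun_scale:
  assumes "u \<in> Dspace p q r a b c" "(\<lambda>n. c n * \<bar>u n\<bar> powr q) summable_on UNIV" "0 \<le> t"
  defines "A \<equiv> Enorm_p p a b u"
    and "B \<equiv> \<Sum>\<^sub>\<infinity>n. c n * \<bar>u n\<bar> powr q"
    and "L \<equiv> \<Sum>\<^sub>\<infinity>n. log_term q r c u n"
  shows "Ifun p q r a b c (\<lambda>n. t * u n)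
           = t powr p * A / p + t powr q * (r / q\<^sup>2 * B - L / q) - r / q * ln t * t powr q * B"
proof -
  have summable_L: "log_term q r c u summable_on UNIV"
    using assms(1) by (simp add: Dspace_def)
  have "Enorm_p p a b (\<lambda>n. t * u n) = t powr p * A"
    unfolding Enorm_p_def A_def using assms(3)
    by (simp add: E_term_scale infsum_cmult_right')
  moreover have "(\<Sum>\<^sub>\<infinity>n. c n * \<bar>t * u n\<bar> powr q) = t powr q * B"
    unfolding B_def using assms(3)
    by (simp add: abs_mult powr_mult mult.left_commute[of "c _"] infsum_cmult_right')
  moreover have "(\<Sum>\<^sub>\<infinity>n. log_term q r c (\<lambda>n. t * u n) n) = t powr q * L + r * ln t * t powr q * B"
    unfolding L_def B_def using assms(2,3) summable_L
    by (simp add: log_term_scale infsum_add summable_on_cmult_right infsum_cmult_right')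
  ultimately show ?thesis
    unfolding Ifun_def by (simp add: add_divide_distrib algebra_simps)
qed

theorem corollary2p5:
  fixes p q r :: real and a b c :: "int \<Rightarrow> real" and u :: "int \<Rightarrow> real"
  assumes pq: "1 < p" "p < q"
    and p_half: "\<exists>k::nat. k > 0 \<and> p / 2 = real k"
    and r: "r \<ge> 1"
    and pos: "\<And>n. a n > 0" "\<And>n. b n > 0" "\<And>n. c n > 0"
    and C1: "\<exists>b0>0. \<forall>n. b n \<ge> b0" "filterlim (\<lambda>n. b n) at_top (sup at_bot at_top)"
    and C2: "\<exists>c0>0. \<forall>n. c n \<le> c0" "c summable_on UNIV"
    and uN: "u \<in> Nehari p q r a b c"
  shows "(\<forall>t\<ge>0. (\<lambda>n. t * u n) \<in> Dspace p q r a b c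
              \<and> Ifun p q r a b c (\<lambda>n. t * u n) \<le> Ifun p q r a b c u)
         \<and> Ifun p q r a b c u = (SUP t \<in> {0..}. Ifun p q r a b c (\<lambda>n. t * u n))"
proof -
  have uD: "u \<in> Dspace p q r a b c" and "Ideriv p q r a b c u u = 0"
    using uN by (auto simp: Nehari_def)
  then have nehari: "Enorm_p p a b u = (\<Sum>\<^sub>\<infinity>n. log_term q r c u n)"
    by (simp add: Ideriv_self)
  obtain b0 where "0 < b0" "\<And>n. b0 \<le> b n"
    using C1(1) by auto
  then have "\<bar>u n\<bar> \<le> (Enorm_p p a b u / b0) powr (1 / p)" for n
    using uD pq pos(1) by (intro Espace_abs_le) (auto simp: Dspace_def less_imp_le)
  then have summable_B: "(\<lambda>n. c n * \<bar>u n\<bar> powr q) summable_on UNIV"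
    using C2(2) pos(3) pq by (intro summable_on_mult_abs_powr_bounded) (auto simp: less_imp_le)
  define A where "A = Enorm_p p a b u"
  define B where "B = (\<Sum>\<^sub>\<infinity>n. c n * \<bar>u n\<bar> powr q)"
  have "0 \<le> A"
    unfolding A_def Enorm_p_def E_term_def using pos by (intro infsum_nonneg) (simp add: less_imp_le)
  moreover have "0 \<le> B"
    unfolding B_def using pos by (intro infsum_nonneg) (simp add: less_imp_le)
  moreover have I: "Ifun p q r a b c (\<lambda>n. t * u n) = fibering_map p q r A B t" if "0 \<le> t" for t
    using Ifun_scale[OF uD summable_B that] nehari unfolding A_def B_def fibering_map_def
    by (simp add: field_simps)
  ultimately have max: "(\<lambda>n. t * u n) \<in> Dspace p q r a b c
                        \<and> Ifun p q r a b c (\<lambda>n. t * u n) \<le> Ifun p q r a b c u" if "0 \<le> t" for t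
    using that Dspace_scale[OF uD summable_B that] I[of 1] fibering_map_le_one[of t p q A B r] pq r by auto
  have "Ifun p q r a b c u \<in> (\<lambda>t. Ifun p q r a b c (\<lambda>n. t * u n)) ` {0..}"
    by (rule image_eqI[of _ _ 1]) auto
  then have "Ifun p q r a b c u = (SUP t \<in> {0..}. Ifun p q r a b c (\<lambda>n. t * u n))"
    using max by (intro cSup_eq_maximum[symmetric]) auto
  with max show ?thesis by blast
qed

end
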